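(* Let $k=k(n)$ be the number of top order statistics used, let $\alpha(k)$ satisfy $0<\alpha(k)\le k$ and $\varDelta:=\lim_{k\to\infty}\alpha(k)/k$ with $0<\varDelta\le 1$, let $\theta_1,\dots,\theta_k$ be i.i.d. $U(0,1)$, and assume the second-order parameter $\rho<0$ is estimated by a consistent estimator $\hat\rho$. Then, as $k\to\infty$ and $k/n\to 0$, almost surely with respect to the law of $(\theta_j)$: (i) $S_1(\theta)=\sum_{j=1}^k \tilde W_j C_j \to \frac{1}{1-\rho}$; (ii) $S_2(\theta)=\sum_{j=1}^k \tilde W_j C_j^2-\big(\sum_{j=1}^k \tilde W_j C_j\big)^2\to \frac{\rho^2}{(1-2\rho)(1-\rho)^2}$; (iii) $\dot S(\theta)=\sum_{j=1}^k \tilde W_j^2\,(S_1(\theta)-C_j)\to 0$; (iv) $\ddot S(\theta)=\sum_{j=1}^k \tilde W_j^2\,(S_1(\theta)-C_j)^2\to 0$.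
   Context: For $j=1,\dots,k$: the random weights are $W_j=1-\theta_j^{\alpha(k)}\frac{j}{k+1}$, the normalised weights are $\tilde W_j=W_j/\sum_{i=1}^k W_i$, and the covariates are $C_j=\left(\frac{j}{k+1}\right)^{-\rho}$ with $\rho<0$ (computed in practice with the estimate $\hat\rho$). The $\theta_j$ are independent of the data. Throughout the paper the standing assumption $0<\varDelta\le 1$ on $\varDelta=\lim_{k\to\infty}\alpha(k)/k$ is made. *)

theory Defs
  imports "HOL-Probability.Probability"
begin

text \<open>Random weights W_j = 1 - theta_j^(alpha(k)) * j/(k+1), j = 1..k.
  The sequence theta is indexed from 1 (theta 1, ..., theta k are used).\<close>
definition W :: "(nat \<Rightarrow> real) \<Rightarrow> (nat \<Rightarrow> real) \<Rightarrow> nat \<Rightarrow> nat \<Rightarrow> real" where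
  "W \<alpha> \<theta> k j = 1 - (\<theta> j) powr (\<alpha> k) * (real j / (real k + 1))"

definition Wt :: "(nat \<Rightarrow> real) \<Rightarrow> (nat \<Rightarrow> real) \<Rightarrow> nat \<Rightarrow> nat \<Rightarrow> real" where
  "Wt \<alpha> \<theta> k j = W \<alpha> \<theta> k j / (\<Sum>i=1..k. W \<alpha> \<theta> k i)"

definition Cov :: "real \<Rightarrow> nat \<Rightarrow> nat \<Rightarrow> real" where
  "Cov r k j = (real j / (real k + 1)) powr (- r)"

definition S1 :: "(nat \<Rightarrow> real) \<Rightarrow> real \<Rightarrow> (nat \<Rightarrow> real) \<Rightarrow> nat \<Rightarrow> real" where
  "S1 \<alpha> r \<theta> k = (\<Sum>j=1..k. Wt \<alpha> \<theta> k j * Cov r k j)"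

definition S2 :: "(nat \<Rightarrow> real) \<Rightarrow> real \<Rightarrow> (nat \<Rightarrow> real) \<Rightarrow> nat \<Rightarrow> real" where
  "S2 \<alpha> r \<theta> k = (\<Sum>j=1..k. Wt \<alpha> \<theta> k j * (Cov r k j)^2) - (S1 \<alpha> r \<theta> k)^2"

definition Sdot :: "(nat \<Rightarrow> real) \<Rightarrow> real \<Rightarrow> (nat \<Rightarrow> real) \<Rightarrow> nat \<Rightarrow> real" where
  "Sdot \<alpha> r \<theta> k = (\<Sum>j=1..k. (Wt \<alpha> \<theta> k j)^2 * (S1 \<alpha> r \<theta> k - Cov r k j))"

definition Sddot :: "(nat \<Rightarrow> real) \<Rightarrow> real \<Rightarrow> (nat \<Rightarrow> real) \<Rightarrow> nat \<Rightarrow> real" where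
  "Sddot \<alpha> r \<theta> k = (\<Sum>j=1..k. (Wt \<alpha> \<theta> k j)^2 * (S1 \<alpha> r \<theta> k - Cov r k j)^2)"

end

theory Submission
  imports Defs
begin

(* Write W_j = 1 - e_j with 0 <= e_j <= theta_j^alpha(k). Everything is deterministic once
   the mean (1/k) sum_j theta_j^alpha(k) tends to 0: then sum_j W_j ~ k, so the normalised
   weights average every bounded triangular array like the uniform weights 1/k do, and
   sum_j Wt_j^2 <= 1 / sum_j W_j -> 0, which kills Sdot and Sddot. The covariate averages
   are Riemann sums of x^(-rho) and x^(-2 rho); sandwiching sum_(j<=k) j^s between
   k^(s+1)/(s+1) and (k+1)^(s+1)/(s+1) makes them converge even though the exponent
   rhohat(k) moves with k.
   The mean of theta_j^alpha(k) has second moment at most q^2 + q/k with q = 1/(alpha(k) + 1),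
   which is O(1/k^2) because alpha(k) grows linearly; a summable series of second moments
   forces almost sure convergence to 0. *)

section \<open>Riemann sums of powers\<close>

lemma powr_plus_one_diff_bounds:
  fixes s x :: real
  assumes s: "0 < s" and x: "0 \<le> x"
  shows "(s + 1) * x powr s \<le> (x + 1) powr (s + 1) - x powr (s + 1)"
    and "(x + 1) powr (s + 1) - x powr (s + 1) \<le> (s + 1) * (x + 1) powr s"
proof -
  have deriv: "((\<lambda>y. y powr (s + 1)) has_real_derivative (s + 1) * z powr s) (at z)" if "0 < z" for z
    using has_real_derivative_powr[OF that, of "s + 1"] by simp
  have "continuous_on {x..x + 1} (\<lambda>y. y powr (s + 1))"
    using s x by (intro continuous_on_powr') (auto intro: continuous_intros)
  moreover have "(\<lambda>y. y powr (s + 1)) differentiable (at y)" if "x < y" for y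
    using deriv[of y] that x real_differentiable_def by auto
  ultimately obtain l z where z: "x < z" "z < x + 1"
    and l: "((\<lambda>y. y powr (s + 1)) has_real_derivative l) (at z)"
    and diff: "(x + 1) powr (s + 1) - x powr (s + 1) = (x + 1 - x) * l"
    using MVT[of x "x + 1" "\<lambda>y. y powr (s + 1)"] by auto
  have "l = (s + 1) * z powr s"
    using DERIV_unique[OF l deriv] z x by simp
  moreover have "x powr s \<le> z powr s" "z powr s \<le> (x + 1) powr s"
    using z x s by (auto intro: powr_mono2)
  ultimately show "(s + 1) * x powr s \<le> (x + 1) powr (s + 1) - x powr (s + 1)"
    and "(x + 1) powr (s + 1) - x powr (s + 1) \<le> (s + 1) * (x + 1) powr s"
    using diff s by auto
qed

lemma sum_powr_bounds:
  fixes s :: real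
  assumes s: "0 < s"
  shows "real k powr (s + 1) / (s + 1) \<le> (\<Sum>j=1..k. real j powr s)"
    and "(\<Sum>j=1..k. real j powr s) \<le> (real k + 1) powr (s + 1) / (s + 1)"
proof -
  show "real k powr (s + 1) / (s + 1) \<le> (\<Sum>j=1..k. real j powr s)"
  proof (induction k)
    case (Suc k)
    have "real (Suc k) powr (s + 1) \<le> real k powr (s + 1) + (s + 1) * real (Suc k) powr s"
      using powr_plus_one_diff_bounds(2)[OF s, of "real k"] by (simp add: add.commute)
    with Suc s show ?case by (simp add: field_simps)
  qed simp
  show "(\<Sum>j=1..k. real j powr s) \<le> (real k + 1) powr (s + 1) / (s + 1)"
  proof (induction k)
    case (Suc k)
    have "(real k + 1) powr (s + 1) + (s + 1) * real (Suc k) powr s \<le> (real k + 2) powr (s + 1)"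
      using powr_plus_one_diff_bounds(1)[OF s, of "real k + 1"] by (simp add: add.commute add.left_commute)
    with Suc s show ?case by (simp add: field_simps)
  qed (use s in simp)
qed

lemma Riemann_sum_powr_bounds:
  fixes s :: real
  assumes s: "0 < s"
  shows "real k * (real k / (real k + 1)) powr s / (s + 1) \<le> (\<Sum>j=1..k. (real j / (real k + 1)) powr s)"
    and "(\<Sum>j=1..k. (real j / (real k + 1)) powr s) \<le> (real k + 1) / (s + 1)"
proof -
  have K: "0 < (real k + 1) powr s" by simp
  have sum_eq: "(\<Sum>j=1..k. (real j / (real k + 1)) powr s) = (\<Sum>j=1..k. real j powr s) / (real k + 1) powr s"
    by (simp add: powr_divide sum_divide_distrib)
  have "real k * (real k / (real k + 1)) powr s / (s + 1) = real k powr (s + 1) / (s + 1) / (real k + 1) powr s"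
    by (cases "k = 0") (simp_all add: powr_divide powr_add mult_ac)
  also have "\<dots> \<le> (\<Sum>j=1..k. (real j / (real k + 1)) powr s)"
    unfolding sum_eq using sum_powr_bounds(1)[OF s, of k] K by (intro divide_right_mono) auto
  finally show "real k * (real k / (real k + 1)) powr s / (s + 1) \<le> (\<Sum>j=1..k. (real j / (real k + 1)) powr s)" .
  have "(\<Sum>j=1..k. (real j / (real k + 1)) powr s) \<le> (real k + 1) powr (s + 1) / (s + 1) / (real k + 1) powr s"
    unfolding sum_eq using sum_powr_bounds(2)[OF s, of k] K by (intro divide_right_mono) auto
  also have "\<dots> = (real k + 1) / (s + 1)"
    using K by (simp add: powr_add)
  finally show "(\<Sum>j=1..k. (real j / (real k + 1)) powr s) \<le> (real k + 1) / (s + 1)" .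
qed

lemma tendsto_Riemann_sum_powr:
  fixes s :: "nat \<Rightarrow> real"
  assumes s: "s \<longlonglongrightarrow> s0" and s0: "0 < s0"
  shows "(\<lambda>k. (\<Sum>j=1..k. (real j / (real k + 1)) powr s k) / real k) \<longlonglongrightarrow> 1 / (s0 + 1)"
proof (rule tendsto_sandwich)
  have ev: "\<forall>\<^sub>F k in sequentially. 0 < s k \<and> 1 \<le> k"
    using order_tendstoD(1)[OF s s0] eventually_ge_at_top[of 1] by eventually_elim auto
  show "\<forall>\<^sub>F k in sequentially. (real k / (real k + 1)) powr s k / (s k + 1)
      \<le> (\<Sum>j=1..k. (real j / (real k + 1)) powr s k) / real k"
    using ev
  proof eventually_elim
    case (elim k)
    then have "real k * (real k / (real k + 1)) powr s k / (s k + 1) / real k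
        \<le> (\<Sum>j=1..k. (real j / (real k + 1)) powr s k) / real k"
      by (intro divide_right_mono Riemann_sum_powr_bounds) auto
    with elim show ?case by simp
  qed
  show "\<forall>\<^sub>F k in sequentially. (\<Sum>j=1..k. (real j / (real k + 1)) powr s k) / real k
      \<le> (real k + 1) / real k / (s k + 1)"
    using ev
  proof eventually_elim
    case (elim k)
    then have "(\<Sum>j=1..k. (real j / (real k + 1)) powr s k) / real k \<le> (real k + 1) / (s k + 1) / real k"
      by (intro divide_right_mono Riemann_sum_powr_bounds) auto
    then show ?case by (simp add: divide_divide_eq_left mult.commute)
  qed
  have "(\<lambda>k. real k / (real k + 1)) \<longlonglongrightarrow> 1"
    using LIMSEQ_n_over_Suc_n by (simp add: add.commute)
  then have "(\<lambda>k. (real k / (real k + 1)) powr s k) \<longlonglongrightarrow> 1 powr s0"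
    by (intro tendsto_powr s) auto
  then show "(\<lambda>k. (real k / (real k + 1)) powr s k / (s k + 1)) \<longlonglongrightarrow> 1 / (s0 + 1)"
    using s0 by (auto intro!: tendsto_intros s)
  have "(\<lambda>k. (real k + 1) / real k) \<longlonglongrightarrow> 1"
    using LIMSEQ_Suc_n_over_n by (simp add: add.commute)
  then show "(\<lambda>k. (real k + 1) / real k / (s k + 1)) \<longlonglongrightarrow> 1 / (s0 + 1)"
    using s0 by (intro tendsto_divide tendsto_add s) auto
qed

section \<open>Normalised weights\<close>

lemma tendsto_weighted_mean:
  fixes w c :: "nat \<Rightarrow> nat \<Rightarrow> real"
  assumes w_le_1: "\<And>k j. 1 \<le> j \<Longrightarrow> j \<le> k \<Longrightarrow> w k j \<le> 1"
    and defect: "(\<lambda>k. (\<Sum>j=1..k. 1 - w k j) / real k) \<longlonglongrightarrow> 0"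
    and c_bounded: "\<forall>\<^sub>F k in sequentially. \<forall>j\<in>{1..k}. \<bar>c k j\<bar> \<le> 1"
    and mean_c: "(\<lambda>k. (\<Sum>j=1..k. c k j) / real k) \<longlonglongrightarrow> L"
  shows "(\<lambda>k. (\<Sum>j=1..k. w k j * c k j) / (\<Sum>j=1..k. w k j)) \<longlonglongrightarrow> L"
proof -
  have "(\<lambda>k. (\<Sum>j=1..k. (1 - w k j) * c k j) / real k) \<longlonglongrightarrow> 0"
  proof (rule Lim_null_comparison[OF _ defect])
    show "\<forall>\<^sub>F k in sequentially. norm ((\<Sum>j=1..k. (1 - w k j) * c k j) / real k)
        \<le> (\<Sum>j=1..k. 1 - w k j) / real k"
      using c_bounded
    proof eventually_elim
      case (elim k)
      have "\<bar>\<Sum>j=1..k. (1 - w k j) * c k j\<bar> \<le> (\<Sum>j=1..k. \<bar>(1 - w k j) * c k j\<bar>)"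
        by (rule sum_abs)
      also have "\<dots> \<le> (\<Sum>j=1..k. 1 - w k j)"
        using elim w_le_1 by (intro sum_mono) (auto simp: abs_mult intro: mult_left_le)
      finally show ?case by (simp add: divide_right_mono)
    qed
  qed
  then have "(\<lambda>k. ((\<Sum>j=1..k. c k j) / real k - (\<Sum>j=1..k. (1 - w k j) * c k j) / real k)
      / (1 - (\<Sum>j=1..k. 1 - w k j) / real k)) \<longlonglongrightarrow> (L - 0) / (1 - 0)"
    by (intro tendsto_intros mean_c defect) auto
  moreover have "\<forall>\<^sub>F k in sequentially.
      ((\<Sum>j=1..k. c k j) / real k - (\<Sum>j=1..k. (1 - w k j) * c k j) / real k)
      / (1 - (\<Sum>j=1..k. 1 - w k j) / real k)
      = (\<Sum>j=1..k. w k j * c k j) / (\<Sum>j=1..k. w k j)"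
    using eventually_ge_at_top[of 1]
  proof eventually_elim
    case (elim k)
    have "(\<Sum>j=1..k. w k j * c k j) = (\<Sum>j=1..k. c k j) - (\<Sum>j=1..k. (1 - w k j) * c k j)"
      by (simp add: sum_subtractf left_diff_distrib)
    moreover have "(\<Sum>j=1..k. w k j) = real k - (\<Sum>j=1..k. 1 - w k j)"
      by (simp add: sum_subtractf)
    moreover have "1 - (\<Sum>j=1..k. 1 - w k j) / real k = (real k - (\<Sum>j=1..k. 1 - w k j)) / real k"
      using elim by (simp add: diff_divide_distrib)
    ultimately show ?case
      using elim by (simp add: diff_divide_distrib[symmetric])
  qed
  ultimately have "(\<lambda>k. (\<Sum>j=1..k. w k j * c k j) / (\<Sum>j=1..k. w k j)) \<longlonglongrightarrow> (L - 0) / (1 - 0)"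
    by (rule Lim_transform_eventually)
  then show ?thesis by simp
qed

lemma abs_sum_square_mult_le:
  fixes v d :: "'a \<Rightarrow> real"
  assumes "\<And>j. j \<in> J \<Longrightarrow> \<bar>d j\<bar> \<le> 1"
  shows "\<bar>\<Sum>j\<in>J. (v j)^2 * d j\<bar> \<le> (\<Sum>j\<in>J. (v j)^2)"
proof -
  have "\<bar>\<Sum>j\<in>J. (v j)^2 * d j\<bar> \<le> (\<Sum>j\<in>J. \<bar>(v j)^2 * d j\<bar>)"
    by (rule sum_abs)
  also have "\<dots> \<le> (\<Sum>j\<in>J. (v j)^2)"
    using assms by (intro sum_mono) (auto simp: abs_mult intro: mult_left_le)
  finally show ?thesis .
qed

lemma one_minus_W_bounds:
  assumes "j \<le> k"
  shows "0 \<le> 1 - W a t k j" and "1 - W a t k j \<le> t j powr a k"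
  using assms mult_left_le[of "real j / (real k + 1)" "t j powr a k"] by (auto simp: W_def)

lemma Cov_bounds:
  assumes "r < 0" "j \<le> k"
  shows "0 \<le> Cov r k j" and "Cov r k j \<le> 1"
  using assms by (auto simp: Cov_def intro: powr_le1)

lemma Cov_square: "(Cov r k j)^2 = Cov (2 * r) k j"
  by (simp add: Cov_def power2_eq_square flip: powr_add)

context
  fixes t a :: "nat \<Rightarrow> real"
  assumes t_01: "\<And>j. 0 \<le> t j \<and> t j \<le> 1"
    and a_pos: "\<And>k. 1 \<le> k \<Longrightarrow> 0 < a k"
    and mean_powr_tendsto_0: "(\<lambda>k. (\<Sum>j=1..k. t j powr a k) / real k) \<longlonglongrightarrow> 0"
begin

lemma W_bounds:
  assumes "j \<in> {1..k}"
  shows "0 < W a t k j \<and> W a t k j \<le> 1"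
proof
  have "0 < a k"
    using assms a_pos by auto
  then have "t j powr a k * (real j / (real k + 1)) \<le> 1 * (real j / (real k + 1))"
    using t_01 by (intro mult_right_mono powr_le1) auto
  moreover have "real j / (real k + 1) < 1"
    using assms by simp
  ultimately show "0 < W a t k j"
    unfolding W_def by linarith
  show "W a t k j \<le> 1"
    using assms one_minus_W_bounds(1) by simp
qed

lemma mean_one_minus_W_tendsto_0: "(\<lambda>k. (\<Sum>j=1..k. 1 - W a t k j) / real k) \<longlonglongrightarrow> 0"
proof (rule tendsto_sandwich[OF _ _ tendsto_const mean_powr_tendsto_0])
  show "\<forall>\<^sub>F k in sequentially. 0 \<le> (\<Sum>j=1..k. 1 - W a t k j) / real k"
    using one_minus_W_bounds(1) by (auto intro!: always_eventually divide_nonneg_nonneg sum_nonneg)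
  show "\<forall>\<^sub>F k in sequentially. (\<Sum>j=1..k. 1 - W a t k j) / real k \<le> (\<Sum>j=1..k. t j powr a k) / real k"
    using one_minus_W_bounds(2) by (auto intro!: always_eventually divide_right_mono sum_mono)
qed

lemma inverse_sum_W_tendsto_0: "(\<lambda>k. 1 / (\<Sum>j=1..k. W a t k j)) \<longlonglongrightarrow> 0"
proof -
  have "(\<lambda>k. (1 / real k) / (1 - (\<Sum>j=1..k. 1 - W a t k j) / real k)) \<longlonglongrightarrow> 0 / (1 - 0)"
    by (intro tendsto_intros lim_1_over_n mean_one_minus_W_tendsto_0) auto
  moreover have "\<forall>\<^sub>F k in sequentially.
      (1 / real k) / (1 - (\<Sum>j=1..k. 1 - W a t k j) / real k) = 1 / (\<Sum>j=1..k. W a t k j)"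
    using eventually_ge_at_top[of 1]
    by eventually_elim (simp add: sum_subtractf field_simps)
  ultimately show ?thesis
    by (simp add: Lim_transform_eventually)
qed

lemma tendsto_sum_Wt_mult:
  fixes c :: "nat \<Rightarrow> nat \<Rightarrow> real"
  assumes "\<forall>\<^sub>F k in sequentially. \<forall>j\<in>{1..k}. \<bar>c k j\<bar> \<le> 1"
    and "(\<lambda>k. (\<Sum>j=1..k. c k j) / real k) \<longlonglongrightarrow> L"
  shows "(\<lambda>k. \<Sum>j=1..k. Wt a t k j * c k j) \<longlonglongrightarrow> L"
  using tendsto_weighted_mean[OF _ mean_one_minus_W_tendsto_0 assms] W_bounds
  by (simp add: Wt_def sum_divide_distrib)

lemma sum_W_pos:
  assumes "1 \<le> k"
  shows "0 < (\<Sum>j=1..k. W a t k j)"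
  using assms W_bounds by (intro sum_pos) auto

lemma Wt_nonneg:
  assumes "j \<in> {1..k}"
  shows "0 \<le> Wt a t k j"
  using assms W_bounds[OF assms] sum_W_pos[of k] by (simp add: Wt_def)

lemma sum_Wt_eq_1:
  assumes "1 \<le> k"
  shows "(\<Sum>j=1..k. Wt a t k j) = 1"
  using sum_W_pos[OF assms] by (simp add: Wt_def flip: sum_divide_distrib)

lemma sum_Wt_square_le:
  assumes "1 \<le> k"
  shows "(\<Sum>j=1..k. (Wt a t k j)^2) \<le> 1 / (\<Sum>j=1..k. W a t k j)"
proof -
  have "(\<Sum>j=1..k. (Wt a t k j)^2) \<le> (\<Sum>j=1..k. Wt a t k j / (\<Sum>i=1..k. W a t k i))"
  proof (rule sum_mono)
    fix j assume "j \<in> {1..k}"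
    then show "(Wt a t k j)^2 \<le> Wt a t k j / (\<Sum>i=1..k. W a t k i)"
      using W_bounds by (simp add: Wt_def power2_eq_square divide_right_mono mult_left_le)
  qed
  then show ?thesis
    using sum_Wt_eq_1[OF assms] by (simp flip: sum_divide_distrib)
qed

lemma sum_Wt_square_tendsto_0: "(\<lambda>k. \<Sum>j=1..k. (Wt a t k j)^2) \<longlonglongrightarrow> 0"
proof (rule Lim_null_comparison[OF _ inverse_sum_W_tendsto_0])
  show "\<forall>\<^sub>F k in sequentially. norm (\<Sum>j=1..k. (Wt a t k j)^2) \<le> 1 / (\<Sum>j=1..k. W a t k j)"
    using eventually_ge_at_top[of 1]
  proof eventually_elim
    case (elim k)
    have "0 \<le> (\<Sum>j=1..k. (Wt a t k j)^2)"
      by (simp add: sum_nonneg)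
    then show ?case
      using sum_Wt_square_le[OF elim] by simp
  qed
qed

lemma tendsto_sum_Wt_Cov:
  assumes r: "r \<longlonglongrightarrow> \<rho>" and \<rho>: "\<rho> < 0"
  shows "(\<lambda>k. \<Sum>j=1..k. Wt a t k j * Cov (r k) k j) \<longlonglongrightarrow> 1 / (1 - \<rho>)"
proof (rule tendsto_sum_Wt_mult)
  show "\<forall>\<^sub>F k in sequentially. \<forall>j\<in>{1..k}. \<bar>Cov (r k) k j\<bar> \<le> 1"
    using order_tendstoD(2)[OF r \<rho>] by eventually_elim (simp add: Cov_bounds)
  have "(\<lambda>k. (\<Sum>j=1..k. (real j / (real k + 1)) powr (- r k)) / real k) \<longlonglongrightarrow> 1 / (- \<rho> + 1)"
    using \<rho> by (intro tendsto_Riemann_sum_powr tendsto_minus r) auto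
  then show "(\<lambda>k. (\<Sum>j=1..k. Cov (r k) k j) / real k) \<longlonglongrightarrow> 1 / (1 - \<rho>)"
    by (simp add: Cov_def)
qed

lemma S1_bounds:
  assumes "1 \<le> k" "r < 0"
  shows "0 \<le> S1 a r t k \<and> S1 a r t k \<le> 1"
proof
  show "0 \<le> S1 a r t k"
    unfolding S1_def using assms Wt_nonneg Cov_bounds by (auto intro: sum_nonneg)
  have "S1 a r t k \<le> (\<Sum>j=1..k. Wt a t k j)"
    unfolding S1_def using assms Wt_nonneg Cov_bounds by (auto intro!: sum_mono mult_left_le)
  then show "S1 a r t k \<le> 1"
    using sum_Wt_eq_1[OF assms(1)] by simp
qed

lemma tendsto_S1:
  assumes "r \<longlonglongrightarrow> \<rho>" "\<rho> < 0"
  shows "(\<lambda>k. S1 a (r k) t k) \<longlonglongrightarrow> 1 / (1 - \<rho>)"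
  unfolding S1_def using assms by (rule tendsto_sum_Wt_Cov)

lemma tendsto_S2:
  assumes r: "r \<longlonglongrightarrow> \<rho>" and \<rho>: "\<rho> < 0"
  shows "(\<lambda>k. S2 a (r k) t k) \<longlonglongrightarrow> \<rho>^2 / ((1 - 2*\<rho>) * (1 - \<rho>)^2)"
proof -
  have "(\<lambda>k. \<Sum>j=1..k. Wt a t k j * Cov (2 * r k) k j) \<longlonglongrightarrow> 1 / (1 - 2 * \<rho>)"
    using \<rho> by (intro tendsto_sum_Wt_Cov tendsto_mult_left r) auto
  then have lim: "(\<lambda>k. S2 a (r k) t k) \<longlonglongrightarrow> 1 / (1 - 2 * \<rho>) - (1 / (1 - \<rho>))^2"
    unfolding S2_def Cov_square by (intro tendsto_intros tendsto_S1 r \<rho>)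
  have "1 / (1 - 2 * \<rho>) - (1 / (1 - \<rho>))^2 = ((1 - \<rho>)^2 - (1 - 2 * \<rho>)) / ((1 - 2*\<rho>) * (1 - \<rho>)^2)"
    using \<rho> by (simp add: power_divide diff_frac_eq)
  also have "(1 - \<rho>)^2 - (1 - 2 * \<rho>) = \<rho>^2"
    by (simp add: power2_eq_square algebra_simps)
  finally have limit_eq: "1 / (1 - 2 * \<rho>) - (1 / (1 - \<rho>))^2 = \<rho>^2 / ((1 - 2*\<rho>) * (1 - \<rho>)^2)" .
  show ?thesis
    using lim unfolding limit_eq .
qed

lemma eventually_abs_S1_minus_Cov_le_1:
  assumes r: "r \<longlonglongrightarrow> \<rho>" and \<rho>: "\<rho> < 0"
  shows "\<forall>\<^sub>F k in sequentially. \<forall>j\<in>{1..k}. \<bar>S1 a (r k) t k - Cov (r k) k j\<bar> \<le> 1"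
  using order_tendstoD(2)[OF r \<rho>] eventually_ge_at_top[of 1]
proof eventually_elim
  case (elim k)
  show ?case
  proof
    fix j assume "j \<in> {1..k}"
    then have "0 \<le> Cov (r k) k j" "Cov (r k) k j \<le> 1"
      using Cov_bounds[of "r k" j k] elim by auto
    then show "\<bar>S1 a (r k) t k - Cov (r k) k j\<bar> \<le> 1"
      using S1_bounds[of k "r k"] elim by auto
  qed
qed

lemma tendsto_Sdot:
  assumes "r \<longlonglongrightarrow> \<rho>" "\<rho> < 0"
  shows "(\<lambda>k. Sdot a (r k) t k) \<longlonglongrightarrow> 0"
proof (rule Lim_null_comparison[OF _ sum_Wt_square_tendsto_0])
  show "\<forall>\<^sub>F k in sequentially. norm (Sdot a (r k) t k) \<le> (\<Sum>j=1..k. (Wt a t k j)^2)"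
    using eventually_abs_S1_minus_Cov_le_1[OF assms]
  proof eventually_elim
    case (elim k)
    show ?case
      unfolding Sdot_def real_norm_def by (rule abs_sum_square_mult_le) (use elim in auto)
  qed
qed

lemma tendsto_Sddot:
  assumes "r \<longlonglongrightarrow> \<rho>" "\<rho> < 0"
  shows "(\<lambda>k. Sddot a (r k) t k) \<longlonglongrightarrow> 0"
proof (rule Lim_null_comparison[OF _ sum_Wt_square_tendsto_0])
  show "\<forall>\<^sub>F k in sequentially. norm (Sddot a (r k) t k) \<le> (\<Sum>j=1..k. (Wt a t k j)^2)"
    using eventually_abs_S1_minus_Cov_le_1[OF assms]
  proof eventually_elim
    case (elim k)
    show ?case
      unfolding Sddot_def real_norm_def by (rule abs_sum_square_mult_le) (use elim in \<open>auto simp: abs_square_le_1\<close>)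
  qed
qed

end

section \<open>Almost sure convergence of the mean of the powers\<close>

lemma AE_tendsto_0_if_summable_nn_integral_square:
  fixes X :: "nat \<Rightarrow> 'a \<Rightarrow> real"
  assumes meas: "\<And>k. X k \<in> borel_measurable M"
    and B_nonneg: "\<And>k. 0 \<le> B k" and B_summable: "summable B"
    and moment: "\<And>k. (\<integral>\<^sup>+\<omega>. ennreal ((X k \<omega>)^2) \<partial>M) \<le> ennreal (B k)"
  shows "AE \<omega> in M. (\<lambda>k. X k \<omega>) \<longlonglongrightarrow> 0"
proof -
  have "(\<integral>\<^sup>+\<omega>. (\<Sum>k. ennreal ((X k \<omega>)^2)) \<partial>M) = (\<Sum>k. \<integral>\<^sup>+\<omega>. ennreal ((X k \<omega>)^2) \<partial>M)"
    using meas by (intro nn_integral_suminf) measurable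
  also have "\<dots> \<le> (\<Sum>k. ennreal (B k))"
    by (intro suminf_le moment summableI)
  also have "\<dots> = ennreal (\<Sum>k. B k)"
    by (rule suminf_ennreal2[OF B_nonneg B_summable])
  also have "\<dots> < \<infinity>"
    by simp
  finally have "(\<integral>\<^sup>+\<omega>. (\<Sum>k. ennreal ((X k \<omega>)^2)) \<partial>M) \<noteq> \<infinity>"
    by simp
  then have "AE \<omega> in M. (\<Sum>k. ennreal ((X k \<omega>)^2)) \<noteq> \<infinity>"
    using meas by (intro nn_integral_PInf_AE) measurable
  then show ?thesis
  proof eventually_elim
    case (elim \<omega>)
    then have "summable (\<lambda>k. (X k \<omega>)^2)"
      by (intro summable_suminf_not_top) auto
    then have "(\<lambda>k. (X k \<omega>)^2) \<longlonglongrightarrow> 0"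
      by (rule summable_LIMSEQ_zero)
    then have "(\<lambda>k. \<bar>X k \<omega>\<bar>) \<longlonglongrightarrow> 0"
      using tendsto_real_sqrt[of "\<lambda>k. (X k \<omega>)^2" 0] by simp
    then show ?case
      by (rule tendsto_rabs_zero_cancel)
  qed
qed

lemma (in prob_space) nn_integral_square_sum_indep_le:
  fixes X :: "'i \<Rightarrow> 'a \<Rightarrow> real"
  assumes indep: "indep_vars (\<lambda>_. borel) X J" and J: "finite J"
    and nonneg: "\<And>i \<omega>. 0 \<le> X i \<omega>"
    and le_1: "\<And>i. i \<in> J \<Longrightarrow> AE \<omega> in M. X i \<omega> \<le> 1"
    and mean: "\<And>i. i \<in> J \<Longrightarrow> (\<integral>\<^sup>+\<omega>. ennreal (X i \<omega>) \<partial>M) = ennreal q"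
    and q: "0 \<le> q"
  shows "(\<integral>\<^sup>+\<omega>. ennreal ((\<Sum>i\<in>J. X i \<omega>)^2) \<partial>M) \<le> ennreal (real (card J)^2 * q^2 + real (card J) * q)"
proof -
  have meas[measurable]: "X i \<in> borel_measurable M" if "i \<in> J" for i
    using indep that by (simp add: indep_vars_def)
  have pair: "(\<integral>\<^sup>+\<omega>. ennreal (X i \<omega> * X j \<omega>) \<partial>M) \<le> ennreal (q^2 + (if i = j then q else 0))"
    if ij: "i \<in> J" "j \<in> J" for i j
  proof (cases "i = j")
    case True
    have "(\<integral>\<^sup>+\<omega>. ennreal (X i \<omega> * X j \<omega>) \<partial>M) \<le> (\<integral>\<^sup>+\<omega>. ennreal (X i \<omega>) \<partial>M)"
      using le_1[OF ij(1)]
    proof (intro nn_integral_mono_AE, eventually_elim)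
      case (elim \<omega>)
      then show ?case
        using True nonneg[of i \<omega>] by (intro ennreal_leI mult_left_le) auto
    qed
    also have "\<dots> = ennreal q"
      by (rule mean[OF ij(1)])
    also have "\<dots> \<le> ennreal (q^2 + (if i = j then q else 0))"
      using True q by (intro ennreal_leI) auto
    finally show ?thesis .
  next
    case False
    have "indep_vars (\<lambda>_. borel) (\<lambda>l \<omega>. ennreal (X l \<omega>)) {i, j}"
      by (rule indep_vars_compose2[OF indep_vars_subset[OF indep]]) (use ij in auto)
    then have "(\<integral>\<^sup>+\<omega>. (\<Prod>l\<in>{i, j}. ennreal (X l \<omega>)) \<partial>M) = (\<Prod>l\<in>{i, j}. \<integral>\<^sup>+\<omega>. ennreal (X l \<omega>) \<partial>M)"
      by (rule indep_vars_nn_integral[rotated]) simp_all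
    moreover have "ennreal (X i \<omega> * X j \<omega>) = (\<Prod>l\<in>{i, j}. ennreal (X l \<omega>))" for \<omega>
      using False nonneg by (simp add: ennreal_mult)
    ultimately show ?thesis
      using False ij mean q by (simp add: ennreal_mult power2_eq_square)
  qed
  have square_sum: "ennreal ((\<Sum>i\<in>J. X i \<omega>)^2) = (\<Sum>i\<in>J. \<Sum>j\<in>J. ennreal (X i \<omega> * X j \<omega>))" for \<omega>
  proof -
    have "(\<Sum>i\<in>J. X i \<omega>)^2 = (\<Sum>i\<in>J. \<Sum>j\<in>J. X i \<omega> * X j \<omega>)"
      by (simp add: power2_eq_square sum_product)
    then show ?thesis
      using nonneg by (simp add: sum_nonneg flip: sum_ennreal)
  qed
  have "(\<integral>\<^sup>+\<omega>. ennreal ((\<Sum>i\<in>J. X i \<omega>)^2) \<partial>M) = (\<Sum>i\<in>J. \<Sum>j\<in>J. \<integral>\<^sup>+\<omega>. ennreal (X i \<omega> * X j \<omega>) \<partial>M)"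
    unfolding square_sum by (simp add: nn_integral_sum)
  also have "\<dots> \<le> (\<Sum>i\<in>J. \<Sum>j\<in>J. ennreal (q^2 + (if i = j then q else 0)))"
    using pair by (intro sum_mono) auto
  also have "\<dots> = ennreal (\<Sum>i\<in>J. \<Sum>j\<in>J. q^2 + (if i = j then q else 0))"
    using q by (simp add: sum_nonneg flip: sum_ennreal)
  also have "(\<Sum>i\<in>J. \<Sum>j\<in>J. q^2 + (if i = j then q else 0)) = real (card J)^2 * q^2 + real (card J) * q"
    using J by (simp add: sum.distrib power2_eq_square algebra_simps)
  finally show ?thesis .
qed

lemma (in prob_space) nn_integral_square_mean_indep_le:
  fixes X :: "'i \<Rightarrow> 'a \<Rightarrow> real"
  assumes indep: "indep_vars (\<lambda>_. borel) X J" and J: "finite J" "J \<noteq> {}"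
    and nonneg: "\<And>i \<omega>. 0 \<le> X i \<omega>"
    and le_1: "\<And>i. i \<in> J \<Longrightarrow> AE \<omega> in M. X i \<omega> \<le> 1"
    and mean: "\<And>i. i \<in> J \<Longrightarrow> (\<integral>\<^sup>+\<omega>. ennreal (X i \<omega>) \<partial>M) = ennreal q"
    and q: "0 \<le> q"
  shows "(\<integral>\<^sup>+\<omega>. ennreal (((\<Sum>i\<in>J. X i \<omega>) / real (card J))^2) \<partial>M) \<le> ennreal (q^2 + q / real (card J))"
proof -
  have [measurable]: "X i \<in> borel_measurable M" if "i \<in> J" for i
    using indep that by (simp add: indep_vars_def)
  define n where "n = real (card J)"
  have n: "0 < n"
    using J by (simp add: n_def card_gt_0_iff)
  have "(\<integral>\<^sup>+\<omega>. ennreal (((\<Sum>i\<in>J. X i \<omega>) / n)^2) \<partial>M)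
      = (\<integral>\<^sup>+\<omega>. ennreal ((\<Sum>i\<in>J. X i \<omega>)^2) * ennreal (1 / n^2) \<partial>M)"
    using n by (simp add: power_divide ennreal_mult[symmetric])
  also have "\<dots> = (\<integral>\<^sup>+\<omega>. ennreal ((\<Sum>i\<in>J. X i \<omega>)^2) \<partial>M) * ennreal (1 / n^2)"
    by (intro nn_integral_multc) measurable
  also have "\<dots> \<le> ennreal (n^2 * q^2 + n * q) * ennreal (1 / n^2)"
    unfolding n_def by (intro mult_right_mono nn_integral_square_sum_indep_le assms) auto
  also have "\<dots> = ennreal ((n^2 * q^2 + n * q) * (1 / n^2))"
    by (rule ennreal_mult[symmetric]) (use n q in auto)
  also have "(n^2 * q^2 + n * q) * (1 / n^2) = q^2 + q / n"
    using n by (simp add: field_simps power2_eq_square)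
  finally show ?thesis
    by (simp add: n_def)
qed

lemma
  fixes X :: "'a \<Rightarrow> real"
  assumes X: "X \<in> borel_measurable M" and unif: "distr M borel X = uniform_measure lborel {0..1}"
  shows AE_uniform_01: "AE \<omega> in M. 0 \<le> X \<omega> \<and> X \<omega> \<le> 1"
    and nn_integral_powr_uniform_01: "0 < b \<Longrightarrow> (\<integral>\<^sup>+\<omega>. ennreal (X \<omega> powr b) \<partial>M) = ennreal (1 / (b + 1))"
proof -
  have "AE x in distr M borel X. x \<in> {0..1}"
    unfolding unif by (rule AE_uniform_measureI) auto
  then show "AE \<omega> in M. 0 \<le> X \<omega> \<and> X \<omega> \<le> 1"
    using AE_distrD[OF X] by fastforce
  assume b: "0 < b"
  have "((\<lambda>x. x powr b) has_integral (1 powr (b + 1) / (b + 1))) {0..1::real}"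
    using b by (intro has_integral_powr_from_0) auto
  then have "((\<lambda>x. if x \<in> {0..1} then x powr b else 0) has_integral (1 / (b + 1))) UNIV"
    by (subst has_integral_restrict_UNIV) simp
  moreover have "(\<lambda>x. if x \<in> {0..1} then x powr b else 0) = (\<lambda>x. x powr b * indicator {0..1} x)"
    by (auto simp: indicator_def)
  ultimately have integral: "((\<lambda>x. x powr b * indicator {0..1} x) has_integral (1 / (b + 1))) UNIV"
    by simp
  have "(\<integral>\<^sup>+x. ennreal (x powr b) * indicator {0..1} x \<partial>lborel)
      = (\<integral>\<^sup>+x. ennreal (x powr b * indicator {0..1} x) \<partial>lborel)"
    by (intro nn_integral_cong) (auto simp: indicator_def)
  also have "\<dots> = ennreal (1 / (b + 1))"
    by (rule nn_integral_has_integral_lborel[OF _ _ integral]) auto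
  finally have lebesgue: "(\<integral>\<^sup>+x. ennreal (x powr b) * indicator {0..1} x \<partial>lborel) = ennreal (1 / (b + 1))" .
  have "(\<integral>\<^sup>+\<omega>. ennreal (X \<omega> powr b) \<partial>M) = (\<integral>\<^sup>+x. ennreal (x powr b) \<partial>distr M borel X)"
    using X by (simp add: nn_integral_distr)
  also have "\<dots> = (\<integral>\<^sup>+x. ennreal (x powr b) * indicator {0..1} x \<partial>lborel) / emeasure lborel {0..1::real}"
    unfolding unif by (rule nn_integral_uniform_measure) auto
  also have "\<dots> = ennreal (1 / (b + 1))"
    using lebesgue by (simp add: divide_ennreal_def)
  finally show "(\<integral>\<^sup>+\<omega>. ennreal (X \<omega> powr b) \<partial>M) = ennreal (1 / (b + 1))" .
qed

lemma summable_second_moment_bound: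
  fixes a :: "nat \<Rightarrow> real"
  assumes a_lim: "(\<lambda>k. a k / real k) \<longlonglongrightarrow> D" and D: "0 < D"
  shows "summable (\<lambda>k. (1 / (a k + 1))^2 + 1 / (a k + 1) / real k)"
proof (rule summable_comparison_test_ev)
  define d where "d = D / 2"
  have d: "0 < d" "d < D"
    using D by (auto simp: d_def)
  show "summable (\<lambda>k. (1 / d^2 + 1 / d) * inverse (real k ^ 2))"
    by (intro summable_mult inverse_power_summable) auto
  show "\<forall>\<^sub>F k in sequentially. norm ((1 / (a k + 1))^2 + 1 / (a k + 1) / real k)
      \<le> (1 / d^2 + 1 / d) * inverse (real k ^ 2)"
    using order_tendstoD(1)[OF a_lim d(2)] eventually_ge_at_top[of 1]
  proof eventually_elim
    case (elim k)
    then have k: "0 < real k" and dk: "0 < d * real k" "d * real k < a k"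
      using d by (auto simp: field_simps)
    then have q: "0 < 1 / (a k + 1)" "1 / (a k + 1) \<le> 1 / (d * real k)"
      by (auto intro!: divide_left_mono)
    then have "(1 / (a k + 1))^2 + 1 / (a k + 1) / real k \<le> (1 / (d * real k))^2 + 1 / (d * real k) / real k"
      using k by (intro add_mono power_mono divide_right_mono) auto
    also have "\<dots> = (1 / d^2 + 1 / d) * inverse (real k ^ 2)"
      using d k by (simp add: field_simps power2_eq_square)
    finally show ?case
      using q k by simp
  qed
qed

lemma (in prob_space) AE_mean_powr_uniform_tendsto_0:
  fixes \<theta> :: "nat \<Rightarrow> 'a \<Rightarrow> real" and a :: "nat \<Rightarrow> real"
  assumes indep: "indep_vars (\<lambda>_. borel) \<theta> UNIV"
    and unif: "\<And>j. distr M borel (\<theta> j) = uniform_measure lborel {0..1}"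
    and a_pos: "\<And>k. 1 \<le> k \<Longrightarrow> 0 < a k" and a_lim: "(\<lambda>k. a k / real k) \<longlonglongrightarrow> D" and D: "0 < D"
  shows "AE \<omega> in M. (\<lambda>k. (\<Sum>j=1..k. \<theta> j \<omega> powr a k) / real k) \<longlonglongrightarrow> 0"
proof (rule AE_tendsto_0_if_summable_nn_integral_square
    [where B = "\<lambda>k. (1 / (a k + 1))^2 + 1 / (a k + 1) / real k"])
  have meas[measurable]: "\<theta> j \<in> borel_measurable M" for j
    using indep by (simp add: indep_vars_def)
  show "(\<lambda>\<omega>. (\<Sum>j=1..k. \<theta> j \<omega> powr a k) / real k) \<in> borel_measurable M" for k
    by measurable
  show "summable (\<lambda>k. (1 / (a k + 1))^2 + 1 / (a k + 1) / real k)"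
    by (rule summable_second_moment_bound[OF a_lim D])
  show "0 \<le> (1 / (a k + 1))^2 + 1 / (a k + 1) / real k" for k
    using a_pos[of k] by (cases "k = 0") auto
  show "(\<integral>\<^sup>+\<omega>. ennreal (((\<Sum>j=1..k. \<theta> j \<omega> powr a k) / real k)^2) \<partial>M)
      \<le> ennreal ((1 / (a k + 1))^2 + 1 / (a k + 1) / real k)" for k
  proof (cases "k = 0")
    case False
    then have a: "0 < a k"
      using a_pos by simp
    have "(\<integral>\<^sup>+\<omega>. ennreal (((\<Sum>j\<in>{1..k}. \<theta> j \<omega> powr a k) / real (card {1..k}))^2) \<partial>M)
        \<le> ennreal ((1 / (a k + 1))^2 + 1 / (a k + 1) / real (card {1..k}))"
    proof (rule nn_integral_square_mean_indep_le)
      show "indep_vars (\<lambda>_. borel) (\<lambda>j \<omega>. \<theta> j \<omega> powr a k) {1..k}"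
        by (rule indep_vars_compose2[OF indep_vars_subset[OF indep]]) auto
      show "AE \<omega> in M. \<theta> j \<omega> powr a k \<le> 1" for j
        using AE_uniform_01[OF meas[of j] unif] by eventually_elim (use a in \<open>auto intro!: powr_le1\<close>)
      show "(\<integral>\<^sup>+\<omega>. ennreal (\<theta> j \<omega> powr a k) \<partial>M) = ennreal (1 / (a k + 1))" for j
        using nn_integral_powr_uniform_01[OF meas[of j] unif a] by simp
    qed (use False a in auto)
    then show ?thesis
      by simp
  qed simp
qed

theorem lemma1:
  fixes M :: "'a measure" and \<theta> :: "nat \<Rightarrow> 'a \<Rightarrow> real"
    and \<alpha> :: "nat \<Rightarrow> real" and \<Delta> \<rho> :: real and \<rho>hat :: "nat \<Rightarrow> real"
  assumes "prob_space M"
    and "prob_space.indep_vars M (\<lambda>_. borel) \<theta> UNIV"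
    and "\<And>j. distr M borel (\<theta> j) = uniform_measure lborel {0..1}"
    and "\<And>k. k \<ge> 1 \<Longrightarrow> 0 < \<alpha> k \<and> \<alpha> k \<le> real k"
    and "(\<lambda>k. \<alpha> k / real k) \<longlonglongrightarrow> \<Delta>" and "0 < \<Delta>" and "\<Delta> \<le> 1"
    and "\<rho> < 0" and "\<rho>hat \<longlonglongrightarrow> \<rho>"
  shows "AE \<omega> in M.
     (\<lambda>k. S1 \<alpha> (\<rho>hat k) (\<lambda>j. \<theta> j \<omega>) k) \<longlonglongrightarrow> 1 / (1 - \<rho>) \<and>
     (\<lambda>k. S2 \<alpha> (\<rho>hat k) (\<lambda>j. \<theta> j \<omega>) k) \<longlonglongrightarrow> \<rho>^2 / ((1 - 2*\<rho>) * (1 - \<rho>)^2) \<and>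
     (\<lambda>k. Sdot \<alpha> (\<rho>hat k) (\<lambda>j. \<theta> j \<omega>) k) \<longlonglongrightarrow> 0 \<and>
     (\<lambda>k. Sddot \<alpha> (\<rho>hat k) (\<lambda>j. \<theta> j \<omega>) k) \<longlonglongrightarrow> 0"
proof -
  interpret prob_space M by (rule assms(1))
  have indep: "indep_vars (\<lambda>_. borel) \<theta> UNIV" and unif: "\<And>j. distr M borel (\<theta> j) = uniform_measure lborel {0..1}"
    and \<rho>: "\<rho>hat \<longlonglongrightarrow> \<rho>" "\<rho> < 0"
    using assms(2,3,8,9) by simp_all
  have \<alpha>_pos: "\<And>k. 1 \<le> k \<Longrightarrow> 0 < \<alpha> k"
    using assms(4) by blast
  have "\<And>j. \<theta> j \<in> borel_measurable M"
    using indep by (simp add: indep_vars_def)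
  then have "AE \<omega> in M. \<forall>j. 0 \<le> \<theta> j \<omega> \<and> \<theta> j \<omega> \<le> 1"
    using AE_uniform_01[OF _ unif] by (simp add: AE_all_countable)
  moreover have "AE \<omega> in M. (\<lambda>k. (\<Sum>j=1..k. \<theta> j \<omega> powr \<alpha> k) / real k) \<longlonglongrightarrow> 0"
    by (rule AE_mean_powr_uniform_tendsto_0[OF indep unif \<alpha>_pos assms(5,6)])
  ultimately show ?thesis
  proof eventually_elim
    case (elim \<omega>)
    then have "\<And>j. 0 \<le> \<theta> j \<omega> \<and> \<theta> j \<omega> \<le> 1"
      and "(\<lambda>k. (\<Sum>j=1..k. \<theta> j \<omega> powr \<alpha> k) / real k) \<longlonglongrightarrow> 0"
      by auto
    note deterministic = this(1) \<alpha>_pos this(2) \<rho>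
    show ?case
      using tendsto_S1[OF deterministic] tendsto_S2[OF deterministic]
        tendsto_Sdot[OF deterministic] tendsto_Sddot[OF deterministic] by blast
  qed
qed

end
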